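(* Let $p$ be a prime, let $\alpha,\beta\ge1$ be integers, and let $B$ be a commutative group of exponent $p^\beta$. Then $$\delta(\mathbb{Z}/p^\alpha\mathbb{Z},B)=(\beta(p-1)+1)p^{\alpha-1}-1.$$ Equivalently, the nilpotency index of the augmentation ideal of $(\mathbb{Z}/p^\beta\mathbb{Z})[\mathbb{Z}/p^\alpha\mathbb{Z}]$ is $(\beta(p-1)+1)p^{\alpha-1}$.
   Context: For commutative groups $A,B$, $B^A$ denotes the commutative group (under pointwise addition) of all maps $A\to B$. For $a\in A$, the difference operator $\Delta_a:B^A\to B^A$ is $(\Delta_a f)(x)=f(x+a)-f(x)$. Let $\widetilde{\mathbb N}=\mathbb N\cup\{-\infty,\infty\}$ ($\mathbb N=\{0,1,2,\dots\}$), totally ordered with $-\infty$ least and $\infty$ greatest. The functional degree $\operatorname{fdeg}(f)\in\widetilde{\mathbb N}$ of $f\in B^A$ is: $-\infty$ if $f=0$; otherwise the least $n\in\mathbb N$ such that $\Delta_{a_1}\cdots\Delta_{a_{n+1}}f=0$ for all $a_1,\dots,a_{n+1}\in A$; and $\infty$ if no such $n$ exists. Define $\delta(A,B)=\sup\{\operatorname{fdeg}(f): f\in B^A\}$. For a commutative ring $R$ and group $A$, the augmentation ideal of the group ring $R[A]$ is the kernel of $\sum r_a[a]\mapsto\sum r_a$; the nilpotency index of an ideal $I$ is the least $n\in\mathbb N$ with $I^n=0$, or $\infty$ if none exists. *)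

theory Defs
  imports Main "HOL-Library.Extended_Nat" "HOL-Library.Option_ord" "HOL-Computational_Algebra.Primes"
begin

text \<open>Maps Z/mZ -> B are represented as m-periodic maps int -> B
  (canonical bijection).  The difference operator.\<close>
definition Delta :: "int \<Rightarrow> (int \<Rightarrow> 'b::ab_group_add) \<Rightarrow> (int \<Rightarrow> 'b)" where
  "Delta a f = (\<lambda>x. f (x + a) - f x)"

definition periodic_maps :: "nat \<Rightarrow> (int \<Rightarrow> 'b::ab_group_add) set" where
  "periodic_maps m = {f. \<forall>x. f (x + int m) = f x}"

definition diffs_vanish :: "nat \<Rightarrow> (int \<Rightarrow> 'b::ab_group_add) \<Rightarrow> bool" where
  "diffs_vanish n f \<longleftrightarrow> (\<forall>as::int list. length as = Suc n \<longrightarrow> foldr Delta as f = (\<lambda>_. 0))"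

text \<open>Functional degree in N u {-oo, oo}: None = -oo, Some \<infinity> = oo
  (ordered by Option_ord, None least).\<close>
definition fdeg :: "(int \<Rightarrow> 'b::ab_group_add) \<Rightarrow> enat option" where
  "fdeg f = (if f = (\<lambda>_. 0) then None
             else Some (if \<exists>n. diffs_vanish n f then enat (LEAST n. diffs_vanish n f) else \<infinity>))"

definition delta :: "'b::ab_group_add itself \<Rightarrow> nat \<Rightarrow> enat option" where
  "delta _ m = (SUP f \<in> (periodic_maps m :: (int \<Rightarrow> 'b) set). fdeg f)"

definition nsmul :: "nat \<Rightarrow> 'b::ab_group_add \<Rightarrow> 'b" where
  "nsmul n x = (((+) x) ^^ n) 0"

definition has_exponent :: "'b::ab_group_add itself \<Rightarrow> nat \<Rightarrow> bool" where
  "has_exponent _ e \<longleftrightarrow> e > 0 \<and> (\<forall>x::'b. nsmul e x = 0) \<and>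
     (\<forall>k. k > 0 \<and> (\<forall>x::'b. nsmul k x = 0) \<longrightarrow> e \<le> k)"

end

theory Submission
  imports Defs "HOL-Computational_Algebra.Polynomial"
begin

text \<open>
  Let \<open>M = p\<^sup>\<alpha>\<close>, \<open>m = p\<^sup>\<alpha>\<^sup>-\<^sup>1\<close>, \<open>N = (\<beta>(p - 1) + 1) m\<close> and \<open>x = T - 1 \<in> \<int>[T]\<close>. The maps
  \<open>\<int>/M\<int> \<rightarrow> B\<close> form a \<open>\<int>[T]\<close>-module with \<open>T\<close> acting by translation, \<open>\<Delta>\<^sub>a\<close> acting as \<open>T\<^sup>a - 1 \<in> (x)\<close>
  and \<open>\<Delta>\<^sub>1\<close> as \<open>x\<close>. The action factors through \<open>\<int>[T]/(p\<^sup>\<beta>, T\<^sup>M - 1)\<close>, and this ideal is exactly the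
  annihilator of \<open>b\<^sub>0\<close> times the indicator of \<open>M\<int>\<close>, for \<open>b\<^sub>0\<close> of order \<open>p\<^sup>\<beta>\<close>. So the theorem says
  \<open>x\<^sup>N \<in> (p\<^sup>\<beta>, T\<^sup>M - 1)\<close> and \<open>x\<^sup>N\<^sup>-\<^sup>1 \<notin> (p\<^sup>\<beta>, T\<^sup>M - 1)\<close>.

  With \<open>y = T\<^sup>m - 1\<close> and \<open>T\<^sup>M - 1 = y \<Phi>\<close>, the congruences \<open>x\<^sup>m \<equiv> y (mod p x)\<close> and
  \<open>\<Phi> \<equiv> y\<^sup>p\<^sup>-\<^sup>1 (mod p)\<close> give \<open>x\<^sup>m\<^sup>p \<in> (p x\<^sup>m, p\<^sup>2, T\<^sup>M - 1)\<close>: each further factor \<open>x\<^sup>m\<^sup>(\<^sup>p\<^sup>-\<^sup>1\<^sup>)\<close> costs one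
  more \<open>p\<close>, which is the upper bound. For the lower bound, \<open>x\<^sup>m\<^sup>(\<^sup>p\<^sup>-\<^sup>1\<^sup>) = \<Phi> - p u\<close> with \<open>u(1) = 1\<close>, so
  \<open>x\<^sup>N\<^sup>-\<^sup>1 \<equiv> (-p u)\<^sup>\<beta> x\<^sup>m\<^sup>-\<^sup>1\<close> modulo \<open>\<Phi>\<close>, while \<open>x\<^sup>N\<^sup>-\<^sup>1 \<in> (p\<^sup>\<beta>\<^sup>+\<^sup>1, y)\<close> by the upper bound one level down.
  Since \<open>\<Phi>\<close> and \<open>y\<close> are monic, \<open>p\<^sup>\<beta>\<close> cancels, and \<open>x\<^sup>N\<^sup>-\<^sup>1 \<in> (p\<^sup>\<beta>, T\<^sup>M - 1)\<close> would put
  \<open>u\<^sup>\<beta> x\<^sup>m\<^sup>-\<^sup>1\<close> into \<open>(p, x\<^sup>m)\<close>, contradicting \<open>u(1) = 1\<close>.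
\<close>

section \<open>Integer multiples in an abelian group\<close>

lemma nsmul_0 [simp]: "nsmul 0 x = 0"
  by (simp add: nsmul_def)

lemma nsmul_Suc: "nsmul (Suc n) x = x + nsmul n x"
  by (simp add: nsmul_def)

lemma nsmul_add_left: "nsmul (m + n) x = nsmul m x + nsmul n x"
  by (induct m) (simp_all add: nsmul_Suc add.assoc)

lemma nsmul_add_right: "nsmul n (x + y) = nsmul n x + nsmul n y"
  by (induct n) (simp_all add: nsmul_Suc algebra_simps)

lemma nsmul_zero_right [simp]: "nsmul n 0 = 0"
  by (induct n) (simp_all add: nsmul_Suc)

lemma nsmul_minus_right: "nsmul n (- x) = - nsmul n x"
  by (induct n) (simp_all add: nsmul_Suc algebra_simps)

lemma nsmul_diff_right: "nsmul n (x - y) = nsmul n x - nsmul n y"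
  using nsmul_add_right[of n x "- y"] by (simp add: nsmul_minus_right)

lemma nsmul_mult: "nsmul (m * n) x = nsmul m (nsmul n x)"
  by (induct m) (simp_all add: nsmul_Suc nsmul_add_left)

definition zsmul :: "int \<Rightarrow> 'b::ab_group_add \<Rightarrow> 'b" where
  "zsmul k x = (if k \<ge> 0 then nsmul (nat k) x else - nsmul (nat (- k)) x)"

lemma zsmul_of_nat [simp]: "zsmul (int n) x = nsmul n x"
  by (simp add: zsmul_def)

lemma zsmul_of_nat_diff: "zsmul (int a - int b) x = nsmul a x - nsmul b x"
proof (cases "b \<le> a")
  case True
  then have "int a - int b = int (a - b)" and "nsmul a x = nsmul (a - b) x + nsmul b x"
    using nsmul_add_left[of "a - b" b x] by simp_all
  then show ?thesis
    by (simp only: zsmul_of_nat) simp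
next
  case False
  then have "int a - int b = - int (b - a)" and "nsmul b x = nsmul (b - a) x + nsmul a x"
    using nsmul_add_left[of "b - a" a x] by simp_all
  then show ?thesis
    using False by (simp only:) (simp add: zsmul_def del: of_nat_diff)
qed

lemma zsmul_add_left: "zsmul (k + l) x = zsmul k x + zsmul l x"
proof -
  have "k + l = int (nat k + nat l) - int (nat (- k) + nat (- l))"
    by simp
  then have "zsmul (k + l) x = nsmul (nat k + nat l) x - nsmul (nat (- k) + nat (- l)) x"
    by (simp only: zsmul_of_nat_diff)
  also have "\<dots> = zsmul k x + zsmul l x"
    by (simp add: zsmul_def nsmul_add_left)
  finally show ?thesis .
qed

lemma zsmul_mult: "zsmul (k * l) x = zsmul k (zsmul l x)"
proof -
  define a b c d where "a = nat k" "b = nat (- k)" "c = nat l" "d = nat (- l)"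
  have k: "k = int a - int b" and l: "l = int c - int d"
    by (simp_all add: a_b_c_d_def)
  have "k * l = int (a * c + b * d) - int (a * d + b * c)"
    unfolding k l by (simp add: algebra_simps)
  then have "zsmul (k * l) x = nsmul (a * c + b * d) x - nsmul (a * d + b * c) x"
    by (simp only: zsmul_of_nat_diff)
  also have "\<dots> = zsmul k (zsmul l x)"
    unfolding k l zsmul_of_nat_diff nsmul_add_left nsmul_mult
    by (simp add: nsmul_diff_right algebra_simps)
  finally show ?thesis .
qed

lemma zsmul_add_right: "zsmul k (x + y) = zsmul k x + zsmul k y"
  by (simp add: zsmul_def nsmul_add_right)

lemma zsmul_zero_left [simp]: "zsmul 0 x = 0"
  by (simp add: zsmul_def)

lemma zsmul_zero_right [simp]: "zsmul k 0 = 0"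
  by (simp add: zsmul_def)

lemma zsmul_one [simp]: "zsmul 1 x = x"
  by (simp add: zsmul_def nsmul_Suc)

lemma zsmul_minus_one [simp]: "zsmul (- 1) x = - x"
  by (simp add: zsmul_def nsmul_Suc)

lemma zsmul_gcd_eq_0:
  assumes "zsmul k x = 0" and "zsmul l x = 0"
  shows "zsmul (gcd k l) x = 0"
proof -
  obtain u v where "u * k + v * l = gcd k l"
    using bezout_int by blast
  then show ?thesis
    using assms by (metis zsmul_add_left zsmul_mult zsmul_zero_right add_0)
qed

lemma has_exponent_zsmul_eq_0: "has_exponent TYPE('b::ab_group_add) e \<Longrightarrow> zsmul (int e) (x::'b) = 0"
  by (simp add: has_exponent_def)

lemma element_of_exponent_order:
  assumes "prime p" and "has_exponent TYPE('b) (p ^ b)"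
  obtains z :: "'b::ab_group_add" where "\<forall>c. zsmul c z = 0 \<longrightarrow> int p ^ b dvd c"
proof (cases "b = 0")
  case True
  then show thesis
    using that by simp
next
  case False
  have "p ^ (b - 1) < p ^ b" and "p ^ (b - 1) > 0"
    using False prime_ge_2_nat[OF assms(1)] by (simp_all add: power_strict_increasing)
  then have "\<not> (\<forall>x::'b. nsmul (p ^ (b - 1)) x = 0)"
    using assms(2) unfolding has_exponent_def by (meson not_le)
  then obtain z :: 'b where z: "zsmul (int p ^ (b - 1)) z \<noteq> 0"
    by (auto simp flip: of_nat_power)
  have "int p ^ b dvd c" if c: "zsmul c z = 0" for c
  proof (rule ccontr)
    assume not_dvd: "\<not> int p ^ b dvd c"
    have "zsmul (int p ^ b) z = 0"
      using has_exponent_zsmul_eq_0[OF assms(2)] by (simp flip: of_nat_power)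
    then have g: "zsmul (gcd c (int p ^ b)) z = 0"
      using zsmul_gcd_eq_0 c by blast
    obtain i where "i \<le> b" and i: "gcd c (int p ^ b) = int p ^ i"
      using divides_primepow[of "int p" "gcd c (int p ^ b)" b] assms(1) by auto
    moreover have "i \<noteq> b"
      using i not_dvd by (metis gcd_dvd1)
    ultimately have "gcd c (int p ^ b) dvd int p ^ (b - 1)"
      by (simp add: le_imp_power_dvd)
    then show False
      using g z by (metis dvdE zsmul_mult zsmul_zero_right mult.commute)
  qed
  then show thesis
    using that by blast
qed

section \<open>The polynomial ring acting on maps \<open>\<int> \<rightarrow> B\<close>\<close>

definition shift :: "int \<Rightarrow> (int \<Rightarrow> 'b) \<Rightarrow> int \<Rightarrow> 'b" where
  "shift a f = (\<lambda>x. f (x + a))"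

text \<open>\<open>q\<close> acts by \<open>f \<mapsto> \<Sum>\<^sub>i q\<^sub>i f(_ + i)\<close>, i.e. \<open>T\<close> acts as \<open>shift 1\<close> (see \<open>poly_act_eq_sum\<close>). Maps
  \<open>\<int>/M\<int> \<rightarrow> B\<close> are encoded as \<open>M\<close>-periodic maps, on which the action factors through
  \<open>\<int>[T]/(T\<^sup>M - 1) = \<int>[\<int>/M\<int>]\<close>.\<close>
definition poly_act :: "int poly \<Rightarrow> (int \<Rightarrow> 'b::ab_group_add) \<Rightarrow> int \<Rightarrow> 'b" where
  "poly_act q = fold_coeffs (\<lambda>c G f x. zsmul c (f x) + G (shift 1 f) x) q (\<lambda>f _. 0)"

lemma poly_act_0 [simp]: "poly_act 0 f = (\<lambda>_. 0)"
  by (simp add: poly_act_def)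

lemma poly_act_pCons: "poly_act (pCons c q) f = (\<lambda>x. zsmul c (f x) + poly_act q (shift 1 f) x)"
  by (cases "q = 0 \<and> c = 0") (auto simp: poly_act_def)

lemma poly_act_1 [simp]: "poly_act 1 f = f"
  by (simp add: one_pCons poly_act_pCons)

lemma poly_act_shift: "poly_act q (shift a f) = shift a (poly_act q f)"
proof (induct q arbitrary: f)
  case (pCons c q)
  have "shift 1 (shift a f) = shift a (shift 1 f)"
    by (simp add: shift_def algebra_simps)
  then show ?case
    using pCons(2)[of "shift 1 f"] by (simp add: poly_act_pCons shift_def)
qed (simp add: shift_def)

lemma poly_act_add: "poly_act (q + r) f = (\<lambda>x. poly_act q f x + poly_act r f x)"
proof (induct q arbitrary: r f)
  case (pCons a q)
  obtain b r' where "r = pCons b r'"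
    by (cases r) auto
  then show ?case
    using pCons(2)[of r' "shift 1 f"] by (simp add: poly_act_pCons zsmul_add_left add_ac)
qed simp

lemma poly_act_smult: "poly_act (smult k q) f = (\<lambda>x. zsmul k (poly_act q f x))"
  by (induct q arbitrary: f) (simp_all add: poly_act_pCons zsmul_mult zsmul_add_right)

lemma poly_act_mult: "poly_act (q * r) f = poly_act q (poly_act r f)"
proof (induct q arbitrary: f)
  case (pCons a q)
  have "poly_act (pCons a q * r) f
      = (\<lambda>x. zsmul a (poly_act r f x) + poly_act (q * r) (shift 1 f) x)"
    by (simp add: poly_act_add poly_act_smult poly_act_pCons[of 0])
  then show ?case
    using pCons(2) by (simp add: poly_act_pCons poly_act_shift)
qed simp

lemma poly_act_diff: "poly_act (q - r) f = (\<lambda>x. poly_act q f x - poly_act r f x)"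
proof -
  have "q - r = q + smult (- 1) r"
    by simp
  then show ?thesis
    by (simp only: poly_act_add poly_act_smult zsmul_minus_one) simp
qed

lemma poly_act_eq_sum:
  assumes "\<forall>i\<ge>n. coeff q i = 0"
  shows "poly_act q f x = (\<Sum>i<n. zsmul (coeff q i) (f (x + int i)))"
  using assms
proof (induct q arbitrary: n f x)
  case (pCons c q)
  show ?case
  proof (cases n)
    case 0
    then have "pCons c q = 0"
      using pCons(3) by (intro poly_eqI) simp
    then show ?thesis
      using 0 by simp
  next
    case (Suc n')
    then have "\<forall>i\<ge>n'. coeff q i = 0"
      using pCons(3) by (metis Suc_le_mono coeff_pCons_Suc)
    then show ?thesis
      using pCons(2) unfolding Suc sum.lessThan_Suc_shift
      by (simp add: poly_act_pCons shift_def algebra_simps)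
  qed
qed simp

definition shift_poly :: "int poly" where
  "shift_poly = [:0, 1:]"

definition diff_poly :: "int poly" where
  "diff_poly = [:- 1, 1:]"

lemma shift_poly_eq: "shift_poly = diff_poly + 1"
  by (simp add: diff_poly_def shift_poly_def one_pCons)

lemma shift_poly_power_eq_monom: "shift_poly ^ n = monom 1 n"
  by (simp add: shift_poly_def monom_altdef)

lemma diff_poly_dvd_shift_poly_power: "diff_poly dvd shift_poly ^ n - 1"
proof -
  have "poly (shift_poly ^ n - 1) 1 = 0"
    by (simp add: shift_poly_def)
  then show ?thesis
    unfolding poly_eq_0_iff_dvd by (simp add: diff_poly_def)
qed

lemma shift_poly_power_minus_1_monic:
  assumes "n \<ge> 1"
  shows "lead_coeff (shift_poly ^ n - 1) = 1" and "degree (shift_poly ^ n - 1) = n"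
proof -
  have "shift_poly ^ n - 1 = monom 1 n + (- 1)"
    by (simp add: shift_poly_power_eq_monom)
  moreover have "degree (monom (1::int) n + (- 1)) = n"
    using assms by (subst degree_add_eq_left) (simp_all add: degree_monom_eq)
  ultimately show "degree (shift_poly ^ n - 1) = n" and "lead_coeff (shift_poly ^ n - 1) = 1"
    using assms by simp_all
qed

lemma poly_act_diff_poly: "poly_act diff_poly f = Delta 1 f"
  by (simp add: diff_poly_def poly_act_pCons Delta_def shift_def)

lemma poly_act_shift_poly_power: "poly_act (shift_poly ^ n) f = shift (int n) f"
  by (induct n arbitrary: f)
    (simp_all add: poly_act_mult shift_poly_def poly_act_pCons shift_def algebra_simps)

lemma foldr_Delta_replicate_1: "foldr Delta (replicate n 1) f = poly_act (diff_poly ^ n) f"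
  by (induct n) (simp_all add: poly_act_mult poly_act_diff_poly)

lemma foldr_Delta_zero: "foldr Delta as (\<lambda>_. 0) = (\<lambda>_. 0)"
  by (induct as) (simp_all add: Delta_def)

lemma shift_periodic: "f \<in> periodic_maps M \<Longrightarrow> shift (int M) f = f"
  by (simp add: periodic_maps_def shift_def)

lemma periodic_maps_add_mult:
  assumes "f \<in> periodic_maps M"
  shows "f (x + int M * j) = f x"
proof (induct j rule: int_induct[where k = 0])
  case (step1 i)
  have "f (x + int M * (i + 1)) = f ((x + int M * i) + int M)"
    by (simp add: algebra_simps)
  then show ?case
    using assms step1 by (simp add: periodic_maps_def)
next
  case (step2 i)
  have "f (x + int M * i) = f ((x + int M * (i - 1)) + int M)"
    by (simp add: algebra_simps)
  then show ?case
    using assms step2 by (simp add: periodic_maps_def)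
qed simp

lemma poly_act_periodic_maps: "f \<in> periodic_maps M \<Longrightarrow> poly_act q f \<in> periodic_maps M"
  using poly_act_shift[of q "int M" f] by (simp add: shift_periodic periodic_maps_def shift_def fun_eq_iff)

lemma poly_act_shift_poly_power_minus_1_eq_0:
  "f \<in> periodic_maps M \<Longrightarrow> poly_act ((shift_poly ^ M - 1) * q) f = (\<lambda>_. 0)"
  by (simp add: poly_act_mult poly_act_diff poly_act_shift_poly_power shift_periodic poly_act_periodic_maps)

lemma Delta_periodic_eq_poly_act:
  assumes "f \<in> periodic_maps M" and "M > 0"
  shows "Delta a f = poly_act (shift_poly ^ nat (a mod int M) - 1) f"
proof -
  have "f (x + a) = f (x + a mod int M)" for x
    using periodic_maps_add_mult[OF assms(1), of "x + a mod int M" "a div int M"]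
    by (simp add: add.commute add.left_commute)
  then show ?thesis
    using assms(2) by (simp add: poly_act_diff poly_act_shift_poly_power Delta_def shift_def fun_eq_iff)
qed

lemma foldr_Delta_periodic_eq_poly_act:
  assumes "f \<in> periodic_maps M" and "M > 0"
  shows "\<exists>q. foldr Delta as f = poly_act (q * diff_poly ^ length as) f"
proof (induct as)
  case Nil
  show ?case
    by (rule exI[of _ 1]) simp
next
  case (Cons a as)
  then obtain q where q: "foldr Delta as f = poly_act (q * diff_poly ^ length as) f"
    by blast
  obtain r where r: "shift_poly ^ nat (a mod int M) - 1 = diff_poly * r"
    using diff_poly_dvd_shift_poly_power by blast
  have "foldr Delta (a # as) f = poly_act (diff_poly * r) (poly_act (q * diff_poly ^ length as) f)"
    using q Delta_periodic_eq_poly_act[OF poly_act_periodic_maps[OF assms(1)] assms(2)] r by simp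
  also have "\<dots> = poly_act ((r * q) * diff_poly ^ length (a # as)) f"
    by (simp add: poly_act_mult[symmetric] algebra_simps)
  finally show ?case
    by blast
qed

text \<open>The kernel of \<open>\<int>[T] \<rightarrow> (\<int>/n\<int>)[\<int>/M\<int>]\<close>, \<open>T \<mapsto> [1]\<close>. The augmentation ideal of the group ring
  is generated by the image of \<open>diff_poly\<close>, so its nilpotency index is the least \<open>N\<close> with
  \<open>diff_poly\<^sup>N\<close> in the kernel.\<close>
definition group_ring_kernel :: "int \<Rightarrow> nat \<Rightarrow> int poly set" where
  "group_ring_kernel n M = {q. \<exists>A B. q = [:n:] * A + (shift_poly ^ M - 1) * B}"

lemma group_ring_kernel_mult:
  assumes "q \<in> group_ring_kernel n M"
  shows "r * q \<in> group_ring_kernel n M"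
proof -
  obtain A B where q: "q = [:n:] * A + (shift_poly ^ M - 1) * B"
    using assms by (auto simp: group_ring_kernel_def)
  have "r * q = [:n:] * (r * A) + (shift_poly ^ M - 1) * (r * B)"
    unfolding q by (simp add: algebra_simps)
  then show ?thesis
    by (auto simp: group_ring_kernel_def)
qed

lemma poly_act_group_ring_kernel_eq_0:
  fixes f :: "int \<Rightarrow> 'b::ab_group_add"
  assumes "q \<in> group_ring_kernel n M" and "f \<in> periodic_maps M" and "\<forall>x::'b. zsmul n x = 0"
  shows "poly_act q f = (\<lambda>_. 0)"
proof -
  obtain A B where "q = [:n:] * A + (shift_poly ^ M - 1) * B"
    using assms(1) by (auto simp: group_ring_kernel_def)
  then show ?thesis
    using assms(2,3) by (simp add: poly_act_add poly_act_smult poly_act_shift_poly_power_minus_1_eq_0)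
qed

lemma mem_group_ring_kernel_if_annihilates:
  assumes "M \<ge> 1" and z: "\<forall>c. zsmul c z = 0 \<longrightarrow> n dvd c"
    and "poly_act q (\<lambda>x. if int M dvd x then z else 0) = (\<lambda>_. 0)"
  shows "q \<in> group_ring_kernel n M"
proof -
  define Y where "Y = shift_poly ^ M - 1"
  define f where "f = (\<lambda>x::int. if int M dvd x then z else 0)"
  have f: "f \<in> periodic_maps M"
    by (simp add: periodic_maps_def f_def)
  have Y: "degree Y = M" "lead_coeff Y = 1"
    using shift_poly_power_minus_1_monic[OF assms(1)] by (simp_all add: Y_def)
  then have "Y \<noteq> 0"
    by auto
  obtain Q r where qr: "pseudo_divmod q Y = (Q, r)"
    by (cases "pseudo_divmod q Y") auto
  have q: "q = Y * Q + r"
    using pseudo_divmod(1)[OF \<open>Y \<noteq> 0\<close> qr] Y by simp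
  have r: "\<forall>i\<ge>M. coeff r i = 0"
    using pseudo_divmod(2)[OF \<open>Y \<noteq> 0\<close> qr] Y by (auto intro: coeff_eq_0)
  have "poly_act r f = (\<lambda>_. 0)"
    using assms(3) poly_act_shift_poly_power_minus_1_eq_0[OF f, of Q]
    unfolding f_def[symmetric] Y_def[symmetric] q by (simp add: poly_act_add fun_eq_iff)
  have "n dvd coeff r j" for j
  proof (cases "j < M")
    case True
    \<comment> \<open>the value at \<open>-j\<close> picks out the \<open>j\<close>-th coefficient of the remainder\<close>
    have "poly_act r f (- int j) = (\<Sum>i<M. if i = j then zsmul (coeff r i) z else 0)"
    proof -
      have "int M dvd (- int j + int i) \<longleftrightarrow> i = j" if "i < M" for i
        using that True by (auto simp flip: mod_eq_dvd_iff)
      then show ?thesis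
        unfolding poly_act_eq_sum[OF r] by (intro sum.cong) (auto simp: f_def)
    qed
    then have "zsmul (coeff r j) z = 0"
      using True \<open>poly_act r f = (\<lambda>_. 0)\<close> by (simp add: fun_eq_iff)
    then show ?thesis
      using z by blast
  qed (use r in simp)
  then obtain A where "r = [:n:] * A"
    by (metis const_poly_dvd_iff dvdE)
  then show ?thesis
    unfolding group_ring_kernel_def q Y_def by (intro CollectI exI[of _ A] exI[of _ Q]) simp
qed

section \<open>Powers of \<open>T - 1\<close> modulo \<open>(p\<^sup>b, T\<^sup>M - 1)\<close>\<close>

lemma power_add_mult_mod_sq:
  fixes a P c :: "'a::comm_ring_1"
  shows "\<exists>R. (a + P * c) ^ n = a ^ n + of_nat n * P * a ^ (n - 1) * c + P\<^sup>2 * c * R"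
proof (induct n)
  case (Suc n)
  then obtain R where R: "(a + P * c) ^ n = a ^ n + of_nat n * P * a ^ (n - 1) * c + P\<^sup>2 * c * R"
    by blast
  show ?case
  proof (cases n)
    case (Suc k)
    have "(a + P * c) ^ Suc n = (a + P * c) * (a ^ n + of_nat n * P * a ^ (n - 1) * c + P\<^sup>2 * c * R)"
      by (simp only: power_Suc R)
    also have "\<dots> = a ^ Suc n + of_nat (Suc n) * P * a ^ (Suc n - 1) * c
        + P\<^sup>2 * c * (of_nat n * a ^ k * c + R * a + P * c * R)"
      by (simp add: Suc algebra_simps power2_eq_square)
    finally show ?thesis
      by blast
  qed (auto intro: exI[of _ 0])
qed (auto intro: exI[of _ 0])

lemma power_add_mod_left: "\<exists>Z. (a + b) ^ n = b ^ n + a * (Z::'a::comm_ring_1)"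
proof (induct n)
  case (Suc n)
  then obtain Z where "(a + b) ^ n = b ^ n + a * Z"
    by blast
  then have "(a + b) ^ Suc n = b ^ Suc n + a * (b ^ n + Z * (a + b))"
    by (simp add: algebra_simps)
  then show ?case
    by blast
qed (auto intro: exI[of _ 0])

lemma pcompose_power: "pcompose (q ^ n) r = pcompose q r ^ n"
  by (induct n) (simp_all add: pcompose_mult pcompose_1)

lemma mult_sum_binomial_powers: "[:0, 1:] * (\<Sum>i<p. [:1::int, 1:] ^ i) = [:1, 1:] ^ p - 1"
proof -
  have "1 - [:1::int, 1:] ^ p = (1 - [:1, 1:]) * (\<Sum>i<p. [:1, 1:] ^ i)"
    by (rule one_diff_power_eq)
  also have "1 - [:1::int, 1:] = - [:0, 1:]"
    by (simp add: one_pCons)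
  finally show ?thesis
    by (metis minus_diff_eq minus_minus mult_minus_left)
qed

lemma coeff_sum_binomial_powers: "coeff (\<Sum>i<p. [:1::int, 1:] ^ i) j = int (p choose Suc j)"
proof -
  have "coeff (\<Sum>i<p. [:1::int, 1:] ^ i) j = coeff ([:1, 1:] ^ p - 1) (Suc j)"
    by (simp flip: mult_sum_binomial_powers)
  also have "\<dots> = int (p choose Suc j)"
  proof (cases "Suc j \<le> p")
    case False
    then have "coeff ([:1::int, 1:] ^ p) (Suc j) = 0"
      using degree_power_le[of "[:1::int, 1:]" p] by (intro coeff_eq_0) simp
    then show ?thesis
      using False by (simp add: binomial_eq_0)
  qed (simp add: coeff_linear_poly_power)
  finally show ?thesis .
qed

text \<open>Modulo \<open>p\<close>, \<open>((1 + x)\<^sup>p - 1)/x = \<Sum>\<^sub>j (p choose j+1) x\<^sup>j\<close> reduces to \<open>x\<^sup>p\<^sup>-\<^sup>1\<close>, and its constant term is exactly \<open>p\<close>.\<close>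
lemma sum_binomial_powers_prime:
  assumes "prime p"
  shows "\<exists>d. (\<Sum>i<p. [:1::int, 1:] ^ i) = [:0, 1:] ^ (p - 1) + [:int p:] * (1 + [:0, 1:] * d)"
proof -
  define E where "E = (\<Sum>i<p. [:1::int, 1:] ^ i) - [:0, 1:] ^ (p - 1) - [:int p:]"
  have p2: "p \<ge> 2"
    using assms prime_ge_2_nat by blast
  have coeff_E: "coeff E j = int (p choose Suc j) - (if j = p - 1 then 1 else 0) - (if j = 0 then int p else 0)" for j
    unfolding E_def by (simp add: coeff_sum_binomial_powers shift_poly_power_eq_monom[unfolded shift_poly_def]
        coeff_pCons split: nat.split)
  have "int p dvd coeff E j" for j
  proof -
    consider "j = 0" | "j = p - 1" | "0 < j" "Suc j < p" | "p \<le> j"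
      by linarith
    then show ?thesis
    proof cases
      case 3
      then have "p dvd (p choose Suc j)"
        using dvd_choose_prime[of "Suc j" p] assms by simp
      then show ?thesis
        using 3 by (simp add: coeff_E)
    qed (use p2 in \<open>simp_all add: coeff_E binomial_eq_0\<close>)
  qed
  moreover obtain e E' where E: "E = pCons e E'"
    by (cases E) auto
  moreover have "coeff E 0 = 0"
    using p2 by (simp add: coeff_E)
  ultimately have "E = [:0, 1:] * E'" and "[:int p:] dvd E'"
    by (auto simp: const_poly_dvd_iff) (metis coeff_pCons_Suc)
  then obtain d where "E = [:0, 1:] * ([:int p:] * d)"
    by (auto elim: dvdE)
  then show ?thesis
    unfolding E_def by (intro exI[of _ d]) (simp add: algebra_simps)
qed

lemma prime_binomial_quotient:
  fixes y :: "int poly"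
  assumes "prime p"
  shows "\<exists>\<Phi> d. y * \<Phi> = (1 + y) ^ p - 1 \<and> \<Phi> = y ^ (p - 1) + [:int p:] * (1 + y * d)"
proof -
  define S where "S = (\<Sum>i<p. [:1::int, 1:] ^ i)"
  obtain d where d: "S = [:0, 1:] ^ (p - 1) + [:int p:] * (1 + [:0, 1:] * d)"
    using sum_binomial_powers_prime[OF assms] unfolding S_def by blast
  have one_plus_y: "pcompose [:1, 1:] y = 1 + y"
    by (simp add: pcompose_pCons one_pCons)
  have y: "pcompose [:0, 1:] y = y"
    by (simp add: pcompose_pCons)
  have "y * pcompose S y = pcompose ([:0, 1:] * S) y"
    by (simp only: pcompose_mult y)
  also have "\<dots> = pcompose ([:1, 1:] ^ p - 1) y"
    by (simp only: S_def mult_sum_binomial_powers)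
  also have "\<dots> = (1 + y) ^ p - 1"
    by (simp only: pcompose_diff pcompose_power one_plus_y pcompose_1)
  finally have "y * pcompose S y = (1 + y) ^ p - 1" .
  moreover have "pcompose S y = y ^ (p - 1) + [:int p:] * (1 + y * pcompose d y)"
    unfolding d by (simp only: pcompose_add pcompose_mult pcompose_power y pcompose_1 pcompose_const)
  ultimately show ?thesis
    by blast
qed

lemma diff_poly_power_mult_prime:
  assumes "prime p"
    and h: "diff_poly ^ m = (shift_poly ^ m - 1) + [:int p:] * diff_poly * h"
  shows "\<exists>E F. diff_poly ^ (m * p)
    = (shift_poly ^ (m * p) - 1) + [:int p:] * diff_poly ^ m * E + [:int p:]\<^sup>2 * diff_poly * F"
proof -
  define y where "y = shift_poly ^ m - 1"
  define P where "P = [:int p:]"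
  obtain \<Phi> d where \<Phi>: "y * \<Phi> = (1 + y) ^ p - 1" "\<Phi> = y ^ (p - 1) + P * (1 + y * d)"
    using prime_binomial_quotient[OF assms(1)] unfolding P_def by blast
  define z where "z = 1 + y * d"
  obtain R where R: "(y + P * (diff_poly * h)) ^ p
      = y ^ p + of_nat p * P * y ^ (p - 1) * (diff_poly * h) + P\<^sup>2 * (diff_poly * h) * R"
    using power_add_mult_mod_sq by blast
  have y_eq: "y = diff_poly ^ m - P * diff_poly * h"
    unfolding y_def P_def h by simp
  have "diff_poly ^ (m * p) = (y + P * (diff_poly * h)) ^ p"
    by (simp add: power_mult h y_def P_def mult.assoc)
  also have "\<dots> = y * y ^ (p - 1) + P * P * y ^ (p - 1) * (diff_poly * h) + P\<^sup>2 * (diff_poly * h) * R"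
    using prime_gt_0_nat[OF assms(1)] unfolding R by (simp add: P_def of_nat_poly power_eq_if)
  also have "\<dots> = y * \<Phi> - P * y * z + P\<^sup>2 * diff_poly * (y ^ (p - 1) * h + h * R)"
    by (simp add: \<Phi>(2) z_def algebra_simps power2_eq_square)
  also have "y * \<Phi> = shift_poly ^ (m * p) - 1"
    using \<Phi>(1) by (simp add: y_def power_mult)
  also have "P * y * z = P * diff_poly ^ m * z - P\<^sup>2 * diff_poly * (h * z)"
    unfolding y_eq by (simp add: algebra_simps power2_eq_square)
  finally have "diff_poly ^ (m * p) = (shift_poly ^ (m * p) - 1) + P * diff_poly ^ m * (- z)
      + P\<^sup>2 * diff_poly * (y ^ (p - 1) * h + h * R + h * z)"
    by (simp add: algebra_simps)
  then show ?thesis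
    unfolding P_def by blast
qed

lemma diff_poly_power_prime_power:
  assumes "prime p"
  shows "\<exists>h. diff_poly ^ (p ^ k) = (shift_poly ^ (p ^ k) - 1) + [:int p:] * diff_poly * h"
proof (induct k)
  case 0
  show ?case
    by (rule exI[of _ 0]) (simp add: shift_poly_eq)
next
  case (Suc k)
  then obtain h where "diff_poly ^ (p ^ k) = (shift_poly ^ (p ^ k) - 1) + [:int p:] * diff_poly * h"
    by blast
  then obtain E F where EF: "diff_poly ^ (p ^ k * p) = (shift_poly ^ (p ^ k * p) - 1)
      + [:int p:] * diff_poly ^ (p ^ k) * E + [:int p:]\<^sup>2 * diff_poly * F"
    using diff_poly_power_mult_prime[OF assms] by blast
  have "diff_poly ^ (p ^ k) = diff_poly * diff_poly ^ (p ^ k - 1)"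
    using prime_gt_0_nat[OF assms] by (simp flip: power_Suc)
  then have "diff_poly ^ (p ^ Suc k) = (shift_poly ^ (p ^ Suc k) - 1)
      + [:int p:] * diff_poly * (diff_poly ^ (p ^ k - 1) * E + [:int p:] * F)"
    using EF by (simp add: power_Suc2 algebra_simps power2_eq_square)
  then show ?case
    by blast
qed

lemma diff_poly_power_mod_prime_power:
  assumes "prime p"
  shows "\<exists>E F G. diff_poly ^ (p ^ k + g * (p ^ k * (p - 1)))
    = [:int p:] ^ g * diff_poly ^ (p ^ k) * E + [:int p:] ^ (g + 1) * F + (shift_poly ^ (p ^ k * p) - 1) * G"
proof (induct g)
  case 0
  show ?case
    by (rule exI[of _ 1], rule exI[of _ 0], rule exI[of _ 0]) simp
next
  case (Suc g)
  define m where "m = p ^ k"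
  define P where "P = [:int p:]"
  define Y where "Y = shift_poly ^ (m * p) - 1"
  obtain E F G where EFG: "diff_poly ^ (m + g * (m * (p - 1))) = P ^ g * diff_poly ^ m * E + P ^ (g + 1) * F + Y * G"
    using Suc unfolding m_def P_def Y_def by blast
  obtain h where "diff_poly ^ m = (shift_poly ^ m - 1) + P * diff_poly * h"
    using diff_poly_power_prime_power[OF assms] unfolding m_def P_def by blast
  then obtain E' F' where E'F': "diff_poly ^ (m * p) = Y + P * diff_poly ^ m * E' + P\<^sup>2 * diff_poly * F'"
    using diff_poly_power_mult_prime[OF assms] unfolding P_def Y_def by blast
  obtain q where q: "p = q + 2"
    using prime_ge_2_nat[OF assms] by (metis le_add_diff_inverse2)
  have "m + Suc g * (m * (p - 1)) = m * (p - 1) + (m + g * (m * (p - 1)))"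
    and m_p: "m * p = m * (p - 1) + m" and m_p1: "m * (p - 1) = m + m * q"
    by (simp_all add: q algebra_simps)
  then have "diff_poly ^ (m + Suc g * (m * (p - 1))) = diff_poly ^ (m * (p - 1)) * diff_poly ^ (m + g * (m * (p - 1)))"
    by (simp only: power_add)
  also have "\<dots> = P ^ g * (diff_poly ^ (m * (p - 1)) * diff_poly ^ m) * E + P ^ (g + 1) * diff_poly ^ (m * (p - 1)) * F
      + Y * (diff_poly ^ (m * (p - 1)) * G)"
    unfolding EFG by (simp add: algebra_simps)
  also have "\<dots> = P ^ g * diff_poly ^ (m * p) * E + P ^ (g + 1) * diff_poly ^ m * (diff_poly ^ (m * q) * F)
      + Y * (diff_poly ^ (m * (p - 1)) * G)"
    unfolding m_p m_p1 power_add by (simp add: algebra_simps)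
  also have "\<dots> = P ^ Suc g * diff_poly ^ m * (E' * E + diff_poly ^ (m * q) * F)
      + P ^ (Suc g + 1) * (diff_poly * F' * E) + Y * (P ^ g * E + diff_poly ^ (m * (p - 1)) * G)"
    unfolding E'F' by (simp add: algebra_simps power2_eq_square)
  finally show ?case
    unfolding m_def P_def Y_def by blast
qed

lemma diff_poly_power_in_group_ring_kernel:
  assumes "prime p"
  shows "diff_poly ^ ((g * (p - 1) + 1) * p ^ k) \<in> group_ring_kernel (int p ^ g) (p ^ Suc k)"
proof -
  obtain E F G where "diff_poly ^ (p ^ k + g * (p ^ k * (p - 1)))
      = [:int p:] ^ g * diff_poly ^ (p ^ k) * E + [:int p:] ^ (g + 1) * F + (shift_poly ^ (p ^ k * p) - 1) * G"
    using diff_poly_power_mod_prime_power[OF assms] by blast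
  moreover have "(g * (p - 1) + 1) * p ^ k = p ^ k + g * (p ^ k * (p - 1))"
    by (simp add: algebra_simps)
  ultimately have "diff_poly ^ ((g * (p - 1) + 1) * p ^ k)
      = [:int p ^ g:] * (diff_poly ^ (p ^ k) * E + [:int p:] * F) + (shift_poly ^ (p ^ Suc k) - 1) * G"
    by (simp add: poly_const_pow algebra_simps)
  then show ?thesis
    unfolding group_ring_kernel_def by blast
qed

lemma nilpotency_index_Suc_le:
  fixes b p k :: nat
  assumes "b \<ge> 1" and "p \<ge> 2"
  shows "((b + 1) * (p - 1) + 1) * p ^ k \<le> (b * (p - 1) + 1) * p ^ Suc k - 1"
proof -
  obtain q where q: "p = q + 2"
    using assms(2) by (metis le_add_diff_inverse2)
  have "p ^ k * b * (q + 1) * (q + 1) \<ge> 1"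
    using assms(1) by (simp add: q Suc_le_eq)
  moreover have "(b * (p - 1) + 1) * p ^ Suc k = ((b + 1) * (p - 1) + 1) * p ^ k + p ^ k * b * (q + 1) * (q + 1)"
    by (simp add: q algebra_simps)
  ultimately show ?thesis
    by linarith
qed

lemma diff_poly_power_in_group_ring_kernel_Suc:
  assumes "prime p" and "b \<ge> 1"
  shows "diff_poly ^ ((b * (p - 1) + 1) * p ^ k - 1) \<in> group_ring_kernel (int p ^ Suc b) (p ^ k)"
proof (cases k)
  case 0
  have "b * (p - 1) \<ge> 1"
    using assms prime_ge_2_nat[OF assms(1)] by simp
  then have "diff_poly ^ ((b * (p - 1) + 1) * p ^ k - 1) = diff_poly ^ (b * (p - 1) - 1) * diff_poly"
    by (cases "b * (p - 1)") (simp_all add: 0 power_Suc2)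
  moreover have "diff_poly \<in> group_ring_kernel (int p ^ Suc b) (p ^ k)"
    unfolding group_ring_kernel_def 0 by (intro CollectI exI[of _ 0] exI[of _ 1]) (simp add: shift_poly_eq)
  ultimately show ?thesis
    by (simp add: group_ring_kernel_mult)
next
  case (Suc k')
  define e where "e = ((Suc b) * (p - 1) + 1) * p ^ k'"
  have "e \<le> (b * (p - 1) + 1) * p ^ k - 1"
    unfolding e_def Suc using nilpotency_index_Suc_le[OF assms(2) prime_ge_2_nat[OF assms(1)]] by simp
  then have "diff_poly ^ ((b * (p - 1) + 1) * p ^ k - 1) = diff_poly ^ ((b * (p - 1) + 1) * p ^ k - 1 - e) * diff_poly ^ e"
    by (metis le_add_diff_inverse2 power_add)
  moreover have "diff_poly ^ e \<in> group_ring_kernel (int p ^ Suc b) (p ^ k)"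
    unfolding e_def Suc by (rule diff_poly_power_in_group_ring_kernel[OF assms(1)])
  ultimately show ?thesis
    by (simp add: group_ring_kernel_mult)
qed

lemma diff_poly_power_prime_power_mult_pred:
  assumes "prime p"
  obtains \<Phi> w where "(shift_poly ^ (p ^ k) - 1) * \<Phi> = shift_poly ^ (p ^ Suc k) - 1"
    and "lead_coeff \<Phi> = 1" and "diff_poly ^ (p ^ k * (p - 1)) = \<Phi> - [:int p:] * (1 + diff_poly * w)"
proof -
  define y where "y = shift_poly ^ (p ^ k) - 1"
  define P where "P = [:int p:]"
  obtain h where h: "diff_poly ^ (p ^ k) = y + P * diff_poly * h"
    using diff_poly_power_prime_power[OF assms] unfolding y_def P_def by blast
  obtain \<Phi> d where \<Phi>: "y * \<Phi> = (1 + y) ^ p - 1" "\<Phi> = y ^ (p - 1) + P * (1 + y * d)"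
    using prime_binomial_quotient[OF assms] unfolding P_def by blast
  obtain s where s: "y = diff_poly * s"
    using diff_poly_dvd_shift_poly_power unfolding y_def by blast
  obtain R where R: "(y + P * (diff_poly * h)) ^ (p - 1)
      = y ^ (p - 1) + of_nat (p - 1) * P * y ^ (p - 1 - 1) * (diff_poly * h) + P\<^sup>2 * (diff_poly * h) * R"
    using power_add_mult_mod_sq by blast
  define e where "e = of_nat (p - 1) * y ^ (p - 1 - 1) * h + P * h * R"
  have "diff_poly ^ (p ^ k * (p - 1)) = (y + P * (diff_poly * h)) ^ (p - 1)"
    by (simp add: power_mult h mult.assoc)
  also have "\<dots> = y ^ (p - 1) + P * diff_poly * e"
    unfolding R e_def by (simp add: algebra_simps power2_eq_square)
  also have "\<dots> = \<Phi> - P * (1 + diff_poly * (s * d - e))"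
    unfolding \<Phi>(2) s by (simp add: algebra_simps)
  finally have "diff_poly ^ (p ^ k * (p - 1)) = \<Phi> - [:int p:] * (1 + diff_poly * (s * d - e))"
    unfolding P_def .
  moreover have "(1 + y) ^ p = shift_poly ^ (p ^ Suc k)"
    by (simp add: y_def power_mult[symmetric] mult.commute)
  then have y\<Phi>: "y * \<Phi> = shift_poly ^ (p ^ Suc k) - 1"
    using \<Phi>(1) by simp
  moreover have "lead_coeff \<Phi> = 1"
  proof -
    have "lead_coeff y = 1"
      unfolding y_def by (rule shift_poly_power_minus_1_monic(1)) (use prime_gt_0_nat[OF assms] in simp)
    moreover have "lead_coeff (y * \<Phi>) = 1"
      unfolding y\<Phi> by (rule shift_poly_power_minus_1_monic(1)) (use prime_gt_0_nat[OF assms] in simp)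
    ultimately show ?thesis
      by (simp add: lead_coeff_mult)
  qed
  ultimately show thesis
    using that unfolding y_def by blast
qed

lemma mult_diff_poly_power_neq:
  fixes c :: int
  assumes "\<not> c dvd poly v 1"
  shows "v * diff_poly ^ n \<noteq> [:c:] * E + diff_poly ^ Suc n * F"
proof
  assume "v * diff_poly ^ n = [:c:] * E + diff_poly ^ Suc n * F"
  then have eq: "diff_poly ^ n * (v - diff_poly * F) = smult c E"
    by (simp add: algebra_simps)
  obtain E' where E': "smult c E = diff_poly ^ n * smult c E'"
  proof (cases "c = 0")
    case False
    have "lead_coeff (diff_poly ^ n) = 1"
      by (simp add: diff_poly_def lead_coeff_power)
    then have "diff_poly ^ n dvd E"
      using dvd_monic[of "diff_poly ^ n" c E] False eq by (metis dvd_triv_left)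
    then show thesis
      using that by (auto elim: dvdE)
  qed (use that[of 0] in simp)
  have "diff_poly ^ n \<noteq> 0"
    by (simp add: diff_poly_def)
  moreover have "diff_poly ^ n * (v - diff_poly * F) = diff_poly ^ n * smult c E'"
    using eq E' by simp
  ultimately have "v - diff_poly * F = smult c E'"
    by (metis mult_left_cancel)
  then have "poly (v - diff_poly * F) 1 = poly (smult c E') 1"
    by (rule arg_cong)
  then have "poly v 1 = c * poly E' 1"
    by (simp add: diff_poly_def)
  then show False
    using assms by simp
qed

lemma monic_const_mult_add_cancel:
  fixes g :: "'a::idom poly"
  assumes "lead_coeff g = 1" and "c \<noteq> 0" and "[:c:] * A + g * B = [:c:] * A' + g * B'"
  shows "\<exists>Q. A = A' + g * Q"
proof -
  have "smult c (A - A') = ([:c:] * A + g * B) - ([:c:] * A' + g * B)"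
    by (simp add: algebra_simps smult_diff_right)
  also have "\<dots> = g * (B' - B)"
    unfolding assms(3) by (simp add: algebra_simps)
  finally have "g dvd smult c (A - A')"
    by simp
  then obtain Q where "A - A' = g * Q"
    using dvd_monic[OF assms(1) _ assms(2)] by blast
  then show ?thesis
    by (intro exI[of _ Q]) (simp add: algebra_simps)
qed

lemma power_cofactor_mod_monic:
  fixes \<Phi> u :: "int poly"
  assumes lead_\<Phi>: "lead_coeff \<Phi> = 1" and "c \<noteq> 0" and e: "diff_poly ^ e = \<Phi> - [:c:] * u"
    and "diff_poly ^ (b * e + r) = [:c ^ b:] * A + \<Phi> * C"
  shows "\<exists>Q. A = (- u) ^ b * diff_poly ^ r + \<Phi> * Q"
proof -
  obtain Z where Z: "(\<Phi> - [:c:] * u) ^ b = (- ([:c:] * u)) ^ b + \<Phi> * Z"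
    using power_add_mod_left[of \<Phi> "- ([:c:] * u)" b] by auto
  have "diff_poly ^ (b * e + r) = (\<Phi> - [:c:] * u) ^ b * diff_poly ^ r"
    unfolding power_add by (metis e mult.commute power_mult)
  also have "\<dots> = [:c ^ b:] * ((- u) ^ b * diff_poly ^ r) + \<Phi> * (Z * diff_poly ^ r)"
    unfolding Z minus_mult_right power_mult_distrib poly_const_pow by (simp add: algebra_simps)
  finally have "[:c ^ b:] * A + \<Phi> * C = [:c ^ b:] * ((- u) ^ b * diff_poly ^ r) + \<Phi> * (Z * diff_poly ^ r)"
    using assms(4) by metis
  moreover have "c ^ b \<noteq> 0"
    using \<open>c \<noteq> 0\<close> by simp
  ultimately show ?thesis
    using monic_const_mult_add_cancel[OF lead_\<Phi>] by blast
qed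

lemma group_ring_kernel_cancel:
  assumes "[:c:] * A + (shift_poly ^ M - 1) * C \<in> group_ring_kernel (c * d) M" and "c \<noteq> 0" and "M \<ge> 1"
  shows "A \<in> group_ring_kernel d M"
proof -
  obtain A' B where "[:c:] * A + (shift_poly ^ M - 1) * C = [:c * d:] * A' + (shift_poly ^ M - 1) * B"
    using assms(1) unfolding group_ring_kernel_def by blast
  moreover have "[:c * d:] * A' = [:c:] * ([:d:] * A')"
    by (simp add: ac_simps)
  ultimately obtain Q where "A = [:d:] * A' + (shift_poly ^ M - 1) * Q"
    using monic_const_mult_add_cancel[OF shift_poly_power_minus_1_monic(1)[OF assms(3)] assms(2)] by metis
  then show ?thesis
    unfolding group_ring_kernel_def by blast
qed

lemma diff_poly_power_mem_imp_mod_p: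
  assumes "prime p" and "b \<ge> 1"
    and \<Phi>: "(shift_poly ^ (p ^ k) - 1) * \<Phi> = shift_poly ^ (p ^ Suc k) - 1" and lead_\<Phi>: "lead_coeff \<Phi> = 1"
    and pred: "diff_poly ^ (p ^ k * (p - 1)) = \<Phi> - [:int p:] * u"
    and mem: "diff_poly ^ ((b * (p - 1) + 1) * p ^ k - 1) \<in> group_ring_kernel (int p ^ b) (p ^ Suc k)"
  shows "\<exists>E F. (- u) ^ b * diff_poly ^ (p ^ k - 1) = [:int p:] * E + diff_poly ^ Suc (p ^ k - 1) * F"
proof -
  define m where "m = p ^ k"
  define y where "y = shift_poly ^ m - 1"
  define P where "P = [:int p:]"
  have m1: "m \<ge> 1"
    using prime_gt_0_nat[OF assms(1)] by (simp add: m_def)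
  have n: "(b * (p - 1) + 1) * p ^ k - 1 = b * (m * (p - 1)) + (m - 1)"
    using m1 by (simp add: m_def algebra_simps)
  have y\<Phi>: "y * \<Phi> = shift_poly ^ (p ^ Suc k) - 1"
    unfolding y_def m_def by (rule \<Phi>)
  obtain A B where "diff_poly ^ ((b * (p - 1) + 1) * p ^ k - 1)
      = [:int p ^ b:] * A + (shift_poly ^ (p ^ Suc k) - 1) * B"
    using mem unfolding group_ring_kernel_def by blast
  then have AB: "diff_poly ^ (b * (m * (p - 1)) + (m - 1)) = [:int p ^ b:] * A + \<Phi> * (y * B)"
    and AB': "diff_poly ^ ((b * (p - 1) + 1) * p ^ k - 1) = [:int p ^ b:] * A + (shift_poly ^ m - 1) * (\<Phi> * B)"
    unfolding y\<Phi>[symmetric] n by (simp_all add: y_def mult_ac)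
  \<comment> \<open>modulo \<open>\<Phi>\<close>, \<open>x\<^sup>n\<close> is \<open>p\<^sup>b (-u)\<^sup>b x\<^sup>m\<^sup>-\<^sup>1\<close>; modulo \<open>y\<close>, it is divisible by \<open>p\<^sup>b\<^sup>+\<^sup>1\<close>\<close>
  obtain Q1 where Q1: "A = (- u) ^ b * diff_poly ^ (m - 1) + \<Phi> * Q1"
    using power_cofactor_mod_monic[OF lead_\<Phi> _ pred[folded m_def] AB] prime_gt_0_nat[OF assms(1)] by auto
  have "[:int p ^ b:] * A + (shift_poly ^ m - 1) * (\<Phi> * B) \<in> group_ring_kernel (int p ^ b * int p) m"
    using diff_poly_power_in_group_ring_kernel_Suc[OF assms(1,2), of k] unfolding AB' m_def by (simp only: power_Suc2)
  then obtain A' Q2 where Q2: "A = P * A' + y * Q2"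
    using group_ring_kernel_cancel[OF _ _ m1] prime_gt_0_nat[OF assms(1)]
    unfolding group_ring_kernel_def y_def P_def by fastforce
  obtain h where "diff_poly ^ m = y + P * diff_poly * h"
    using diff_poly_power_prime_power[OF assms(1)] unfolding y_def m_def P_def by blast
  then have y_eq: "y = diff_poly ^ m - P * diff_poly * h"
    by simp
  obtain q where q: "p = q + 2"
    using prime_ge_2_nat[OF assms(1)] by (metis le_add_diff_inverse2)
  have "m * (p - 1) = m + m * q"
    by (simp add: q algebra_simps)
  then have \<Phi>_eq: "\<Phi> = diff_poly ^ m * diff_poly ^ (m * q) + P * u"
    using pred unfolding m_def[symmetric] P_def[symmetric] by (simp add: power_add)
  have "(- u) ^ b * diff_poly ^ (m - 1) = P * A' + y * Q2 - \<Phi> * Q1"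
    using Q1 Q2 by (simp add: eq_diff_eq)
  also have "\<dots> = [:int p:] * (A' - diff_poly * h * Q2 - u * Q1)
      + diff_poly ^ Suc (m - 1) * (Q2 - diff_poly ^ (m * q) * Q1)"
    unfolding y_eq \<Phi>_eq using m1 by (simp add: P_def algebra_simps)
  finally show ?thesis
    unfolding m_def by blast
qed

lemma diff_poly_power_notin_group_ring_kernel:
  assumes "prime p" and "b \<ge> 1"
  shows "diff_poly ^ ((b * (p - 1) + 1) * p ^ k - 1) \<notin> group_ring_kernel (int p ^ b) (p ^ Suc k)"
proof
  obtain \<Phi> w where "(shift_poly ^ (p ^ k) - 1) * \<Phi> = shift_poly ^ (p ^ Suc k) - 1"
    and "lead_coeff \<Phi> = 1" and "diff_poly ^ (p ^ k * (p - 1)) = \<Phi> - [:int p:] * (1 + diff_poly * w)"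
    using diff_poly_power_prime_power_mult_pred[OF assms(1)] by blast
  moreover assume "diff_poly ^ ((b * (p - 1) + 1) * p ^ k - 1) \<in> group_ring_kernel (int p ^ b) (p ^ Suc k)"
  ultimately obtain E F where "(- (1 + diff_poly * w)) ^ b * diff_poly ^ (p ^ k - 1)
      = [:int p:] * E + diff_poly ^ Suc (p ^ k - 1) * F"
    using diff_poly_power_mem_imp_mod_p[OF assms] by blast
  moreover have "\<not> int p dvd poly ((- (1 + diff_poly * w)) ^ b) 1"
    using prime_gt_1_nat[OF assms(1)] by (simp add: diff_poly_def poly_power minus_one_power_iff)
  ultimately show False
    using mult_diff_poly_power_neq by blast
qed

section \<open>Functional degree of periodic maps\<close>

lemma fdeg_le:
  assumes "diffs_vanish n f"
  shows "fdeg f \<le> Some (enat n)"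
  using assms by (auto simp: fdeg_def intro: Least_le)

lemma fdeg_eqI:
  assumes "diffs_vanish n f" and nonzero: "foldr Delta (replicate n 1) f \<noteq> (\<lambda>_. 0)"
  shows "fdeg f = Some (enat n)"
proof -
  have below: "\<not> diffs_vanish m f" if "m < n" for m
  proof
    assume "diffs_vanish m f"
    then have zero: "foldr Delta (replicate (Suc m) 1) f = (\<lambda>_. 0)"
      unfolding diffs_vanish_def by (metis length_replicate)
    have "replicate n (1::int) = replicate (n - Suc m) 1 @ replicate (Suc m) 1"
      using that by (metis le_add_diff_inverse2 less_eq_Suc_le replicate_add)
    then have "foldr Delta (replicate n 1) f = foldr Delta (replicate (n - Suc m) 1) (\<lambda>_. 0)"
      by (simp only: foldr_append zero)
    then show False
      using nonzero by (simp only: foldr_Delta_zero)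
  qed
  have "(LEAST m. diffs_vanish m f) = n"
    using assms(1) below by (intro Least_equality) (auto simp: not_less[symmetric])
  moreover have "f \<noteq> (\<lambda>_. 0)"
    using nonzero foldr_Delta_zero by blast
  ultimately show ?thesis
    using assms(1) by (auto simp: fdeg_def)
qed

lemma delta_eqI:
  fixes f :: "int \<Rightarrow> 'b::ab_group_add"
  assumes "\<And>g :: int \<Rightarrow> 'b. g \<in> periodic_maps M \<Longrightarrow> fdeg g \<le> d"
    and "f \<in> periodic_maps M" and "fdeg f = d"
  shows "delta TYPE('b) M = d"
  unfolding delta_def
proof (rule antisym)
  show "(SUP g \<in> (periodic_maps M :: (int \<Rightarrow> 'b) set). fdeg g) \<le> d"
    using assms(1) by (rule SUP_least)
  show "d \<le> (SUP g \<in> (periodic_maps M :: (int \<Rightarrow> 'b) set). fdeg g)"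
    unfolding assms(3)[symmetric] using assms(2) by (rule SUP_upper)
qed

lemma diffs_vanish_periodic_prime_power:
  fixes f :: "int \<Rightarrow> 'b::ab_group_add"
  assumes "prime p" and "has_exponent TYPE('b) (p ^ b)" and "f \<in> periodic_maps (p ^ Suc k)"
  shows "diffs_vanish ((b * (p - 1) + 1) * p ^ k - 1) f"
  unfolding diffs_vanish_def
proof (intro allI impI)
  fix as :: "int list"
  assume "length as = Suc ((b * (p - 1) + 1) * p ^ k - 1)"
  then have "length as = (b * (p - 1) + 1) * p ^ k"
    using prime_gt_0_nat[OF assms(1)] by simp
  moreover obtain q where "foldr Delta as f = poly_act (q * diff_poly ^ length as) f"
    using foldr_Delta_periodic_eq_poly_act[OF assms(3)] prime_gt_0_nat[OF assms(1)] by auto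
  moreover have "\<forall>x::'b. zsmul (int p ^ b) x = 0"
    using has_exponent_zsmul_eq_0[OF assms(2)] by (simp flip: of_nat_power)
  ultimately show "foldr Delta as f = (\<lambda>_. 0)"
    using poly_act_group_ring_kernel_eq_0[OF group_ring_kernel_mult
        [OF diff_poly_power_in_group_ring_kernel[OF assms(1)]] assms(3)] by simp
qed

lemma fdeg_periodic_prime_power:
  assumes "prime p" and "b \<ge> 1" and "has_exponent TYPE('b) (p ^ b)"
  obtains f :: "int \<Rightarrow> 'b::ab_group_add" where "f \<in> periodic_maps (p ^ Suc k)"
    and "fdeg f = Some (enat ((b * (p - 1) + 1) * p ^ k - 1))"
proof -
  define M where "M = p ^ Suc k"
  define n where "n = (b * (p - 1) + 1) * p ^ k - 1"
  obtain z :: 'b where z: "\<forall>c. zsmul c z = 0 \<longrightarrow> int p ^ b dvd c"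
    using element_of_exponent_order[OF assms(1,3)] by blast
  define f where "f = (\<lambda>x. if int M dvd x then z else 0)"
  have f: "f \<in> periodic_maps M"
    by (simp add: periodic_maps_def f_def)
  have "M \<ge> 1"
    using prime_gt_0_nat[OF assms(1)] by (simp add: M_def)
  then have "foldr Delta (replicate n 1) f \<noteq> (\<lambda>_. 0)"
    using mem_group_ring_kernel_if_annihilates[of M z "int p ^ b"] z
      diff_poly_power_notin_group_ring_kernel[OF assms(1,2), of k]
    unfolding foldr_Delta_replicate_1 f_def M_def n_def by auto
  then have "fdeg f = Some (enat n)"
    using diffs_vanish_periodic_prime_power[OF assms(1,3) f[unfolded M_def]] unfolding n_def
    by (intro fdeg_eqI)
  then show thesis
    using that f unfolding M_def n_def by blast
qed

theorem theorem4:
  fixes p \<alpha> \<beta> :: nat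
  assumes "prime p" and "\<alpha> \<ge> 1" and "\<beta> \<ge> 1"
    and "has_exponent TYPE('b::ab_group_add) (p ^ \<beta>)"
  shows "delta TYPE('b) (p ^ \<alpha>) = Some (enat ((\<beta> * (p - 1) + 1) * p ^ (\<alpha> - 1) - 1))"
proof -
  have \<alpha>: "p ^ \<alpha> = p ^ Suc (\<alpha> - 1)"
    using assms(2) by simp
  obtain f :: "int \<Rightarrow> 'b" where "f \<in> periodic_maps (p ^ Suc (\<alpha> - 1))"
    and "fdeg f = Some (enat ((\<beta> * (p - 1) + 1) * p ^ (\<alpha> - 1) - 1))"
    using fdeg_periodic_prime_power[OF assms(1,3,4)] by blast
  then show ?thesis
    unfolding \<alpha>
    by (rule delta_eqI[rotated]) (use diffs_vanish_periodic_prime_power[OF assms(1,4)] fdeg_le in blast)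
qed

end
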